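(* In the setting of the context, fix $1\le i\le n$ and let $l(i)$ be the line through $N_{i-\frac12}$ and $N_{i+\frac12}$ parallel to $P_{i+n}-P_i$. The line $l(i)$ divides the interior of $P$ into two regions; let $B_2(i)$ be the area of the one containing $P_i$ and $P_{i+n}$ and $B_1(i)$ the area of the other. Then $B_1(i)\ge B_2(i)$.
   Context: $[x,y]$ denotes the determinant of the matrix with columns $x,y\in\mathbb{R}^2$. Fix $n\ge2$; indices (integer and half-integer) are read modulo $2n$. $U$ is a convex $2n$-gon with distinct vertices $U_1,\dots,U_{2n}$ in counterclockwise order with $U_{i+n}=-U_i$, and $V_{i+\frac12}=(U_{i+1}-U_i)/[U_i,U_{i+1}]$. Let $c>0$ and let $P$ be a convex polygon with nonempty interior and vertex list $P_1,\dots,P_{2n}$ (listed counterclockwise, consecutive entries may coincide) with $P_{i+1}-P_i$ a nonnegative multiple of $V_{i+\frac12}$ and $P_i-P_{i+n}=2cU_i$ for all $i$. Let $M_i=\frac12(P_i+P_{i+n})$, define $\alpha_{i+\frac12}$ by $M_{i+1}-M_i=\alpha_{i+\frac12}(U_{i+1}-U_i)$, $\beta_i=\frac12\sum_{j=i}^{i+n-1}\alpha_{j+\frac12}[U_j,U_{j+1}]$, and $N_{i+\frac12}=M_i+\beta_iV_{i+\frac12}$. (One has $N_{i+\frac12}-N_{i-\frac12}=\beta_i(V_{i+\frac12}-V_{i-\frac12})$, which is parallel to $U_i$ and hence to $P_{i+n}-P_i$; if $N_{i-\frac12}=N_{i+\frac12}$, $l(i)$ is the line through this point parallel to $P_{i+n}-P_i$.)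 *)

theory Defs
  imports "HOL-Analysis.Analysis"
begin

text \<open>Points of the plane are vectors in real^2.  Vertex lists indexed modulo 2n are
  encoded as 2n-periodic functions on int.  An object with half-integer index j+1/2
  is encoded by the integer j.\<close>

definition det2 :: "real^2 \<Rightarrow> real^2 \<Rightarrow> real" where
  "det2 x y = x$1 * y$2 - x$2 * y$1"

definition Vh :: "(int \<Rightarrow> real^2) \<Rightarrow> int \<Rightarrow> real^2" where
  "Vh U j = (1 / det2 (U j) (U (j+1))) *\<^sub>R (U (j+1) - U j)"

definition Mid :: "(int \<Rightarrow> real^2) \<Rightarrow> nat \<Rightarrow> int \<Rightarrow> real^2" where
  "Mid P n j = (1/2) *\<^sub>R (P j + P (j + int n))"

definition alpha :: "(int \<Rightarrow> real^2) \<Rightarrow> (int \<Rightarrow> real^2) \<Rightarrow> nat \<Rightarrow> int \<Rightarrow> real" where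
  "alpha U P n j = (THE a. Mid P n (j+1) - Mid P n j = a *\<^sub>R (U (j+1) - U j))"

definition beta :: "(int \<Rightarrow> real^2) \<Rightarrow> (int \<Rightarrow> real^2) \<Rightarrow> nat \<Rightarrow> int \<Rightarrow> real" where
  "beta U P n j = (1/2) * (\<Sum>k = j..j + int n - 1. alpha U P n k * det2 (U k) (U (k+1)))"

definition Nh :: "(int \<Rightarrow> real^2) \<Rightarrow> (int \<Rightarrow> real^2) \<Rightarrow> nat \<Rightarrow> int \<Rightarrow> real^2" where
  "Nh U P n j = Mid P n j + beta U P n j *\<^sub>R Vh U j"

text \<open>Signed side function of the line l(i): the line through N_{i-1/2} parallel to
  P_{i+n} - P_i is exactly the zero set of this function.\<close>
definition lside :: "(int \<Rightarrow> real^2) \<Rightarrow> (int \<Rightarrow> real^2) \<Rightarrow> nat \<Rightarrow> int \<Rightarrow> real^2 \<Rightarrow> real" where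
  "lside U P n i x = det2 (P (i + int n) - P i) (x - Nh U P n (i - 1))"

end

theory Submission
  imports Defs
begin

text \<open>Put h(x) = [U_i, x - M_i]. The line l(i) is the level set h = beta_i, while P_i and
  P_(i+n) lie on h = 0. Fanning each side of h = 0 from M_i into the triangles M_i P_j P_(j+1),
  the triangles of the two sides pair off, and each pair differs in area by a telescoping term
  plus 2 c alpha_(j+1/2) [U_j, U_(j+1)]; summing, the two sides differ in area by 4 c beta_i.
  As [U_i, V_i] = 1 and P lies in the strip 0 <= [V_i, x - P_i] <= 2c, the slab between h = 0 and
  l(i) has area at most 2 c |beta_i|. Moving the cut from h = 0 to l(i) changes each side by at
  most this amount, so the side not containing P_i keeps at least as much area.\<close>

section \<open>Planar determinants\<close>

lemma det2_add_left [simp]: "det2 (a + b) c = det2 a c + det2 b c"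
  by (simp add: det2_def algebra_simps)
lemma det2_add_right [simp]: "det2 c (a + b) = det2 c a + det2 c b"
  by (simp add: det2_def algebra_simps)
lemma det2_diff_left [simp]: "det2 (a - b) c = det2 a c - det2 b c"
  by (simp add: det2_def algebra_simps)
lemma det2_diff_right [simp]: "det2 c (a - b) = det2 c a - det2 c b"
  by (simp add: det2_def algebra_simps)
lemma det2_scaleR_left [simp]: "det2 (r *\<^sub>R a) c = r * det2 a c"
  by (simp add: det2_def algebra_simps)
lemma det2_scaleR_right [simp]: "det2 c (r *\<^sub>R a) = r * det2 c a"
  by (simp add: det2_def algebra_simps)
lemma det2_uminus_left [simp]: "det2 (- a) c = - det2 a c"
  by (simp add: det2_def)
lemma det2_uminus_right [simp]: "det2 c (- a) = - det2 c a"
  by (simp add: det2_def)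
lemma det2_self [simp]: "det2 a a = 0"
  by (simp add: det2_def)
lemma det2_zero [simp]: "det2 0 a = 0" "det2 a 0 = 0"
  by (simp_all add: det2_def)

lemma det2_swap: "det2 b a = - det2 a b"
  by (simp add: det2_def)

lemma det2_sum_left: "det2 (sum f S) y = (\<Sum>k\<in>S. det2 (f k) y)"
  by (simp add: det2_def sum_distrib_right sum_subtractf)

lemma det2_sum_right: "det2 y (sum f S) = (\<Sum>k\<in>S. det2 y (f k))"
  by (simp add: det2_def sum_distrib_left sum_subtractf)

lemma det2_cramer: "det2 a b *\<^sub>R y = det2 y b *\<^sub>R a + det2 a y *\<^sub>R b"
  by (simp add: vec_eq_iff forall_2 det2_def algebra_simps)

lemma det2_plucker: "det2 a b * det2 f w = det2 w b * det2 f a + det2 a w * det2 f b"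
  by (simp add: det2_def algebra_simps)

lemma det2_eq_inner: "det2 v x = vector [- v$2, v$1] \<bullet> x"
  by (simp add: det2_def inner_vec_def sum_2)

lemma det2_ge_halfspace: "{x. a \<le> det2 v (x - p)} = {x. vector [- v$2, v$1] \<bullet> x \<ge> a + det2 v p}"
  by (auto simp: det2_eq_inner inner_diff_right)

lemma det2_le_halfspace: "{x. det2 v (x - p) \<le> a} = {x. vector [- v$2, v$1] \<bullet> x \<le> a + det2 v p}"
  by (auto simp: det2_eq_inner inner_diff_right)

lemma convex_det2_ge: "convex {x. a \<le> det2 v (x - p)}"
  unfolding det2_ge_halfspace by (rule convex_halfspace_ge)

lemma convex_det2_le: "convex {x. det2 v (x - p) \<le> a}"
  unfolding det2_le_halfspace by (rule convex_halfspace_le)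

lemma negligible_det2_line:
  assumes "v \<noteq> 0" shows "negligible {x. det2 v (x - p) = a}"
proof -
  have "{x. det2 v (x - p) = a} = {x. vector [- v$2, v$1] \<bullet> x = a + det2 v p}"
    by (auto simp: det2_eq_inner inner_diff_right)
  moreover have "vector [- v$2, v$1] \<noteq> (0 :: real^2)"
    using assms by (auto simp: vec_eq_iff forall_2)
  ultimately show ?thesis by (simp add: negligible_hyperplane)
qed

lemma continuous_on_det2: "continuous_on S (\<lambda>x. det2 v (x - p))"
  unfolding det2_eq_inner by (intro continuous_intros)

lemma det2_triangle_sum:
  "det2 (b - a) (x - a) + det2 (c - b) (x - b) + det2 (a - c) (x - c) = det2 (b - a) (c - a)"
  by (simp add: det2_def algebra_simps)

text \<open>The three determinants are the barycentric coordinates of x, scaled by twice the area.\<close>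
lemma in_triangle_det2:
  assumes "0 \<le> det2 (b - a) (x - a)" "0 \<le> det2 (c - b) (x - b)" "0 \<le> det2 (a - c) (x - c)"
    and "det2 (b - a) (c - a) \<noteq> 0"
  shows "x \<in> convex hull {a, b, c}"
proof -
  define D la lb lc where "D = det2 (b - a) (c - a)" and "la = det2 (c - b) (x - b)"
    and "lb = det2 (a - c) (x - c)" and "lc = det2 (b - a) (x - a)"
  have sum: "lc + la + lb = D"
    using det2_triangle_sum[of b a x c]
    by (simp add: D_def la_def lb_def lc_def del: det2_diff_left det2_diff_right)
  then have "D > 0"
    using assms by (simp add: D_def la_def lb_def lc_def del: det2_diff_left det2_diff_right)
  have "x = (1 / D) *\<^sub>R (D *\<^sub>R x)" using \<open>D > 0\<close> by simp
  also have "D *\<^sub>R x = la *\<^sub>R a + lb *\<^sub>R b + lc *\<^sub>R c"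
    by (simp add: D_def la_def lb_def lc_def vec_eq_iff forall_2 det2_def algebra_simps)
  finally have "x = (la / D) *\<^sub>R a + (lb / D) *\<^sub>R b + (lc / D) *\<^sub>R c"
    by (simp add: scaleR_add_right)
  moreover have "la / D + lb / D + lc / D = 1"
    using \<open>D > 0\<close> sum by (simp add: add_divide_distrib[symmetric] ac_simps)
  ultimately show ?thesis
    unfolding convex_hull_3 using assms \<open>D > 0\<close>
    by (intro CollectI exI) (auto simp: la_def lb_def lc_def)
qed

section \<open>Area estimates\<close>

lemma measure_triangle_det2:
  "measure lebesgue (convex hull {a, b, c}) = \<bar>det2 (b - a) (c - a)\<bar> / 2"
proof -
  have "closed (convex hull {a, b, c})"
    by (intro compact_imp_closed finite_imp_compact_convex_hull) simp
  then have "measure lebesgue (convex hull {a, b, c}) = measure lborel (convex hull {a, b, c})"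
    by (simp add: measure_completion)
  also have "\<dots> = \<bar>(c $ 1 - a $ 1) * (b $ 2 - a $ 2) - (b $ 1 - a $ 1) * (c $ 2 - a $ 2)\<bar> / 2"
    by (rule content_triangle)
  also have "(c $ 1 - a $ 1) * (b $ 2 - a $ 2) - (b $ 1 - a $ 1) * (c $ 2 - a $ 2)
           = - det2 (b - a) (c - a)"
    by (simp add: det2_def algebra_simps)
  finally show ?thesis by simp
qed

lemma measure_le_det2_parallelogram:
  assumes S: "S \<in> lmeasurable" and uv: "det2 u v \<noteq> 0" and "a \<le> b" "a' \<le> b'"
    and bounds: "\<And>x. x \<in> S \<Longrightarrow> a \<le> det2 u (x - p) \<and> det2 u (x - p) \<le> b \<and>
                                 a' \<le> det2 v (x - p) \<and> det2 v (x - p) \<le> b'"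
  shows "measure lebesgue S \<le> (b - a) * (b' - a') / \<bar>det2 u v\<bar>"
proof -
  define L where "L z = (1 / det2 u v) *\<^sub>R ((z $ 1) *\<^sub>R v - (z $ 2) *\<^sub>R u)" for z :: "real^2"
  define lo :: "real^2" where "lo = vector [a, a']"
  define hi :: "real^2" where "hi = vector [b, b']"
  have lin: "linear L" unfolding linear_iff L_def by (simp add: algebra_simps)
  have sub: "S \<subseteq> (+) p ` L ` cbox lo hi"
  proof
    fix x assume "x \<in> S"
    define z :: "real^2" where "z = vector [det2 u (x - p), det2 v (x - p)]"
    have "z \<in> cbox lo hi"
      using bounds[OF \<open>x \<in> S\<close>] by (simp add: z_def lo_def hi_def mem_box_cart forall_2)
    moreover have "x = p + L z"
    proof -
      have cr: "det2 u v *\<^sub>R (x - p) = det2 u (x - p) *\<^sub>R v - det2 v (x - p) *\<^sub>R u"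
        using det2_cramer[of u v "x - p"] det2_swap[of "x - p" v]
        by (simp del: det2_diff_left det2_diff_right)
      have "x - p = (1 / det2 u v) *\<^sub>R (det2 u v *\<^sub>R (x - p))"
        using uv by simp
      also have "\<dots> = L z"
        unfolding cr by (simp add: L_def z_def)
      finally have "x - p = L z" .
      then show ?thesis by (simp add: algebra_simps)
    qed
    ultimately show "x \<in> (+) p ` L ` cbox lo hi" by blast
  qed
  have "compact ((+) p ` L ` cbox lo hi)"
    by (intro compact_translation compact_continuous_image linear_continuous_on compact_cbox)
       (simp add: lin linear_linear)
  then have "measure lebesgue S \<le> measure lebesgue ((+) p ` L ` cbox lo hi)"
    by (intro measure_mono_fmeasurable[OF sub fmeasurableD[OF S]] lmeasurable_compact)
  also have "\<dots> = \<bar>det (matrix L)\<bar> * measure lebesgue (cbox lo hi)"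
    unfolding measure_translation by (rule measure_lebesgue_linear_transformation[OF _ _ lin]) auto
  also have "det (matrix L) = (1 / det2 u v) * (1 / det2 u v) * (u $ 1 * v $ 2 - u $ 2 * v $ 1)"
    by (simp add: det_2 matrix_def L_def axis_def algebra_simps)
  also have "\<dots> = 1 / det2 u v"
    using uv by (simp add: det2_def[symmetric])
  also have "measure lebesgue (cbox lo hi) = (b - a) * (b' - a')"
  proof -
    have "cbox lo hi \<noteq> {}" using assms by (simp add: lo_def hi_def interval_ne_empty_cart forall_2)
    then have "measure lborel (cbox lo hi) = (\<Prod>i\<in>UNIV. hi $ i - lo $ i)"
      by (rule content_cbox_cart)
    then show ?thesis by (simp add: measure_completion UNIV_2 lo_def hi_def)
  qed
  finally show ?thesis by simp
qed

lemma measure_eq_sum_of_almost_disjoint_cover: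
  assumes "finite I" and F: "\<And>k. k \<in> I \<Longrightarrow> F k \<in> lmeasurable"
    and disj: "pairwise (\<lambda>k l. negligible (F k \<inter> F l)) I"
    and inner: "(\<Union>k\<in>I. F k) \<subseteq> H" and outer: "H \<subseteq> (\<Union>k\<in>I. F k) \<union> L"
    and L: "negligible L"
  shows "measure lebesgue H = (\<Sum>k\<in>I. measure lebesgue (F k))"
proof -
  have "(\<Union>k\<in>I. F k) \<in> lmeasurable"
    using \<open>finite I\<close> F by (rule fmeasurable.finite_UN)
  moreover have "negligible ((\<Union>k\<in>I. F k) - H \<union> (H - (\<Union>k\<in>I. F k)))"
    using inner outer by (intro negligible_subset[OF L]) auto
  ultimately have "measure lebesgue H = measure lebesgue (\<Union>k\<in>I. F k)"
    by (rule measure_negligible_symdiff)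
  also have "\<dots> = (\<Sum>k\<in>I. measure lebesgue (F k))"
    using \<open>finite I\<close> F disj by (rule measure_negligible_finite_Union_image)
  finally show ?thesis .
qed

text \<open>Moving the cut from the level 0 to the level b transfers at most the slab between the
  two levels from one side to the other.\<close>
lemma measure_sublevel_le_superlevel:
  fixes g :: "'a::euclidean_space \<Rightarrow> real"
  assumes K: "compact K" and g: "continuous_on UNIV g"
    and slab: "measure lebesgue {x \<in> K. 0 \<le> g x \<and> g x \<le> b} \<le> w"
    and halves: "measure lebesgue {x \<in> K. g x \<le> 0} + 2 * w \<le> measure lebesgue {x \<in> K. 0 \<le> g x}"
  shows "measure lebesgue {x \<in> K. g x \<le> b} \<le> measure lebesgue {x \<in> K. b \<le> g x}"
proof -
  have lmeas: "{x \<in> K. Q x} \<in> lmeasurable" if "closed {x. Q x}" for Q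
  proof -
    have "{x \<in> K. Q x} = K \<inter> {x. Q x}" by blast
    then show ?thesis using compact_Int_closed[OF K that] by (simp add: lmeasurable_compact)
  qed
  have cl: "closed {x. a \<le> g x}" "closed {x. g x \<le> a}" "closed {x. a \<le> g x \<and> g x \<le> a'}"
    for a a' by (intro closed_Collect_conj closed_Collect_le g continuous_on_const)+
  have le_Un: "measure lebesgue A \<le> measure lebesgue B + measure lebesgue C"
    if "A \<subseteq> B \<union> C" "A \<in> lmeasurable" "B \<in> lmeasurable" "C \<in> lmeasurable" for A B C
    by (meson that fmeasurableD fmeasurable.Un measure_Un_le measure_mono_fmeasurable order_trans)
  have "measure lebesgue {x \<in> K. g x \<le> b}
        \<le> measure lebesgue {x \<in> K. g x \<le> 0} + measure lebesgue {x \<in> K. 0 \<le> g x \<and> g x \<le> b}"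
    by (rule le_Un) (auto intro: lmeas cl)
  moreover have "measure lebesgue {x \<in> K. 0 \<le> g x}
        \<le> measure lebesgue {x \<in> K. b \<le> g x} + measure lebesgue {x \<in> K. 0 \<le> g x \<and> g x \<le> b}"
    by (rule le_Un) (auto intro: lmeas cl)
  ultimately show ?thesis using slab halves by linarith
qed

lemma sum_int_interval_nat: "(\<Sum>k = a..a + int m - 1. f k) = (\<Sum>k<m. f (a + int k))"
proof (induction m)
  case (Suc m)
  have "{a..a + int (Suc m) - 1} = insert (a + int m) {a..a + int m - 1}" by auto
  then show ?case using Suc by (simp add: add.commute)
qed simp

lemma int_sign_change:
  fixes g :: "int \<Rightarrow> real"
  assumes "0 < g a" "g (a + int m) \<le> 0"
  shows "\<exists>k<m. 0 < g (a + int k) \<and> g (a + int k + 1) \<le> 0"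
proof (rule ccontr)
  assume no_change: "\<not> ?thesis"
  have "k \<le> m \<Longrightarrow> 0 < g (a + int k)" for k
  proof (induction k)
    case (Suc k)
    then have "0 < g (a + int k + 1)" using no_change by force
    then show ?case by (simp add: ac_simps)
  qed (use assms in simp)
  then show False using assms by fastforce
qed

lemma periodic_int_add_mult:
  fixes f :: "int \<Rightarrow> 'a"
  assumes per: "\<And>k. f (k + p) = f k"
  shows "f (k + m * p) = f k"
proof (induction m arbitrary: k rule: int_induct[where k = 0])
  case (step1 m)
  then show ?case using per[of "k + m * p"] by (simp add: algebra_simps)
next
  case (step2 m)
  then show ?case using per[of "k + (m - 1) * p"] by (simp add: algebra_simps)
qed simp

lemma periodic_int_mod:
  fixes f :: "int \<Rightarrow> 'a"
  assumes "\<And>k. f (k + p) = f k"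
  shows "f ((k - 1) mod p + 1 + l) = f (k + l)"
proof -
  have "(k - 1) mod p + 1 + l = (k + l) + (- ((k - 1) div p)) * p"
    using minus_div_mult_eq_mod[of "k - 1" p] by simp
  then show ?thesis by (simp only: periodic_int_add_mult[where f = f and p = p, OF assms])
qed

section \<open>The polygons U and P\<close>

locale paired_polygons =
  fixes n :: nat and U P :: "int \<Rightarrow> real^2" and c :: real
  assumes n2: "n \<ge> 2"
    and U_per: "\<And>k. U (k + 2 * int n) = U k"
    and U_inj: "inj_on U {1..2 * int n}"
    and U_convex: "\<And>j k. j \<in> {1..2 * int n} \<Longrightarrow> k \<in> {1..2 * int n} \<Longrightarrow> k \<noteq> j \<Longrightarrow>
             U k \<noteq> U (j+1) \<Longrightarrow> det2 (U (j+1) - U j) (U k - U j) > 0"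
    and U_sym: "\<And>k. U (k + int n) = - U k"
    and c_pos: "c > 0"
    and P_per: "\<And>k. P (k + 2 * int n) = P k"
    and P_edges: "\<And>k. \<exists>t\<ge>0. P (k+1) - P k = t *\<^sub>R Vh U k"
    and P_diag: "\<And>k. P k - P (k + int n) = (2 * c) *\<^sub>R U k"
begin

abbreviation K :: "(real^2) set" where "K \<equiv> convex hull (P ` {1..2 * int n})"
abbreviation V :: "int \<Rightarrow> real^2" where "V \<equiv> Vh U"
abbreviation M :: "int \<Rightarrow> real^2" where "M \<equiv> Mid P n"

definition edge :: "int \<Rightarrow> real^2" where "edge j = U (j+1) - U j"
definition d :: "int \<Rightarrow> real" where "d j = det2 (U j) (U (j+1))"

lemma U_mod: "U ((k - 1) mod (2 * int n) + 1 + l) = U (k + l)"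
  by (rule periodic_int_mod) (rule U_per)

lemma U_sym_succ: "U (j + int n + 1) = - U (j + 1)"
  using U_sym[of "j + 1"] by (simp add: ac_simps)

lemma mod_period_range: "(k - 1) mod (2 * int n) + 1 \<in> {1..2 * int n}"
proof -
  have "0 < 2 * int n" using n2 by simp
  then show ?thesis using pos_mod_bound pos_mod_sign by (simp add: add1_zle_eq)
qed

lemma U_neq: assumes "a < b" "b < a + 2 * int n" shows "U a \<noteq> U b"
proof
  assume "U a = U b"
  then have "U ((a - 1) mod (2 * int n) + 1) = U ((b - 1) mod (2 * int n) + 1)"
    using U_mod[of _ 0] by simp
  then have "(b - 1) mod (2 * int n) = (a - 1) mod (2 * int n)"
    using U_inj mod_period_range by (auto dest: inj_onD)
  then have "2 * int n dvd (b - 1) - (a - 1)"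
    by (simp add: mod_eq_dvd_iff)
  then show False using assms zdvd_imp_le by fastforce
qed

lemma U_convex_pos:
  assumes "U k \<noteq> U j" "U k \<noteq> U (j+1)"
  shows "det2 (edge j) (U k - U j) > 0"
proof -
  define j' k' where "j' = (j - 1) mod (2 * int n) + 1" and "k' = (k - 1) mod (2 * int n) + 1"
  have U': "U j' = U j" "U (j' + 1) = U (j + 1)" "U k' = U k"
    using U_mod[of j 0] U_mod[of j 1] U_mod[of k 0] by (simp_all add: j'_def k'_def)
  have "j' \<in> {1..2 * int n}" "k' \<in> {1..2 * int n}" "k' \<noteq> j'" "U k' \<noteq> U (j' + 1)"
    using mod_period_range U' assms by (auto simp: j'_def k'_def)
  then have "det2 (U (j'+1) - U j') (U k' - U j') > 0" by (rule U_convex)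
  then show ?thesis by (simp only: U' edge_def)
qed

lemma U_convex_nonneg: "det2 (edge j) (U k - U j) \<ge> 0"
proof (cases "U k = U j \<or> U k = U (j+1)")
  case True
  then show ?thesis by (auto simp: edge_def simp del: det2_diff_left det2_diff_right)
next
  case False
  then show ?thesis using U_convex_pos[of k j] by auto
qed

lemma d_pos: "d j > 0"
proof -
  have "U (j + int n) \<noteq> U j" "U (j + int n) \<noteq> U (j+1)"
    using U_neq[of j "j + int n"] U_neq[of "j+1" "j + int n"] n2 by auto
  then have "det2 (edge j) (U (j + int n) - U j) > 0" by (rule U_convex_pos)
  then show ?thesis using U_sym[of j] by (simp add: edge_def d_def det2_def algebra_simps)
qed

lemma U_nonzero: "U j \<noteq> 0"
  using d_pos[of j] by (auto simp: d_def)

lemma d_shift_n: "d (j + int n) = d j"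
  by (simp add: d_def U_sym U_sym_succ)

lemma edge_shift_n: "edge (j + int n) = - edge j"
  by (simp add: edge_def U_sym U_sym_succ)

lemma det2_U_edge: "det2 (U j) (edge j) = d j"
  by (simp add: edge_def d_def)

lemma det2_edge_U_lt_d:
  assumes "U k \<noteq> U (j + int n)" "U k \<noteq> U (j + int n + 1)"
  shows "det2 (edge j) (U k) < d j"
proof -
  have "U (k + int n) \<noteq> U j" "U (k + int n) \<noteq> U (j+1)"
    using assms by (metis U_sym U_sym_succ minus_minus)+
  then have "det2 (edge j) (U (k + int n) - U j) > 0" by (rule U_convex_pos)
  then show ?thesis by (simp add: U_sym edge_def d_def det2_def algebra_simps)
qed

lemma edge_turn_nonneg_nat: "k < n \<Longrightarrow> det2 (edge j) (edge (j + int k)) \<ge> 0"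
proof (induction k)
  case (Suc k)
  define m where "m = j + int k"
  have IH: "det2 (edge j) (edge m) \<ge> 0" using Suc by (simp add: m_def)
  show ?case
  proof (rule ccontr)
    assume "\<not> ?case"
    then have neg: "det2 (edge j) (edge (m+1)) < 0" by (simp add: m_def ac_simps)
    \<comment> \<open>w points from U (m+1) to the vertex antipodal to U j; all four determinants
        below then have fixed signs, which the Pluecker relation forbids.\<close>
    define w where "w = U (j + int n) - U (m+1)"
    have "U (m+1) \<noteq> U (j + int n)" "U (m+1) \<noteq> U (j + int n + 1)"
      using U_neq[of "m+1" "j + int n"] U_neq[of "m+1" "j + int n + 1"] Suc.prems
      by (simp_all add: m_def)
    then have "det2 (edge j) (U (m+1)) < d j" by (rule det2_edge_U_lt_d)
    then have jw: "det2 (edge j) w > 0"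
      using U_sym[of j] by (simp add: w_def edge_def d_def det2_def algebra_simps)
    have "U (j + int n) \<noteq> U m" "U (j + int n) \<noteq> U (m+1)"
      using U_neq[of m "j + int n"] U_neq[of "m+1" "j + int n"] Suc.prems by (simp_all add: m_def)
    then have "det2 (edge m) (U (j + int n) - U m) > 0" by (rule U_convex_pos)
    then have mw: "det2 (edge m) w > 0"
      by (simp add: edge_def w_def det2_def algebra_simps)
    have m1w: "det2 (edge (m+1)) w \<ge> 0"
      using U_convex_nonneg[of "m+1" "j + int n"] by (simp add: w_def)
    have "U (m+2) \<noteq> U m" "U (m+2) \<noteq> U (m+1)"
      using U_neq[of m "m+2"] U_neq[of "m+1" "m+2"] n2 by simp_all
    then have "det2 (edge m) (U (m+2) - U m) > 0" using U_convex_pos[of "m+2" m] by simp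
    then have mm1: "det2 (edge m) (edge (m+1)) > 0"
      by (simp add: edge_def det2_def algebra_simps add.assoc)
    have "det2 (edge m) (edge (m+1)) * det2 (edge j) w
        = det2 w (edge (m+1)) * det2 (edge j) (edge m) + det2 (edge m) w * det2 (edge j) (edge (m+1))"
      by (rule det2_plucker)
    moreover have "det2 w (edge (m+1)) * det2 (edge j) (edge m) \<le> 0"
      using m1w IH by (simp add: det2_swap[of w] mult_nonpos_nonneg)
    moreover have "det2 (edge m) w * det2 (edge j) (edge (m+1)) < 0"
      using mw neg by (simp add: mult_pos_neg)
    moreover have "det2 (edge m) (edge (m+1)) * det2 (edge j) w > 0"
      using mm1 jw by simp
    ultimately show False by linarith
  qed
qed simp

lemma edge_turn_nonneg:
  assumes "j \<le> m" "m \<le> j + int n"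
  shows "det2 (edge j) (edge m) \<ge> 0"
proof (cases "m = j + int n")
  case True
  then show ?thesis by (simp add: edge_shift_n)
next
  case False
  then have "m = j + int (nat (m - j))" "nat (m - j) < n" using assms by auto
  then show ?thesis by (metis edge_turn_nonneg_nat)
qed

lemma V_eq: "V j = (1 / d j) *\<^sub>R edge j"
  by (simp add: Vh_def d_def edge_def)

lemma V_shift_n: "V (j + int n) = - V j"
  by (simp add: V_eq d_shift_n edge_shift_n)

lemma V_per: "V (j + 2 * int n) = V j"
proof -
  have "U (j + 2 * int n + 1) = U (j + 1)" using U_per[of "j + 1"] by (simp add: ac_simps)
  then show ?thesis by (simp add: Vh_def U_per)
qed

lemma V_turn_nonneg: "j \<le> m \<Longrightarrow> m \<le> j + int n \<Longrightarrow> det2 (V j) (V m) \<ge> 0"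
  using edge_turn_nonneg[of j m] d_pos[of j] d_pos[of m] by (simp add: V_eq)

lemma det2_U_V: "det2 (U j) (V j) = 1"
  using d_pos[of j] by (simp add: V_eq det2_U_edge)

lemma det2_U_V_prev: "det2 (U j) (V (j - 1)) = 1"
proof -
  have "det2 (U j) (edge (j - 1)) = d (j - 1)"
    by (simp add: edge_def d_def det2_def algebra_simps)
  then show ?thesis using d_pos[of "j - 1"] by (simp add: V_eq)
qed

definition t :: "int \<Rightarrow> real" where
  "t k = (SOME s. s \<ge> 0 \<and> P (k+1) - P k = s *\<^sub>R V k)"

lemma t_nonneg: "t k \<ge> 0" and P_step: "P (k+1) - P k = t k *\<^sub>R V k"
  using someI_ex[OF P_edges[of k, unfolded Bex_def]] by (simp_all add: t_def)

lemma P_diff_sum: "P (a + int k) - P a = (\<Sum>l<k. t (a + int l) *\<^sub>R V (a + int l))"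
proof (induction k)
  case (Suc k)
  have "P (a + int (Suc k)) - P a = (P (a + int k + 1) - P (a + int k)) + (P (a + int k) - P a)"
    by (simp add: ac_simps)
  then show ?case using P_step Suc by simp
qed simp

lemma P_turn_nonneg:
  assumes "a \<le> b" "b \<le> r" "r \<le> a + int n + 1"
  shows "det2 (P b - P a) (P r - P b) \<ge> 0"
proof -
  define p q where "p = nat (b - a)" and "q = nat (r - b)"
  have "P b - P a = (\<Sum>l<p. t (a + int l) *\<^sub>R V (a + int l))"
    "P r - P b = (\<Sum>m<q. t (b + int m) *\<^sub>R V (b + int m))"
    using P_diff_sum[of a p] P_diff_sum[of b q] assms by (simp_all add: p_def q_def)
  moreover have "det2 (\<Sum>l<p. t (a + int l) *\<^sub>R V (a + int l))
                      (\<Sum>m<q. t (b + int m) *\<^sub>R V (b + int m)) \<ge> 0"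
    unfolding det2_sum_left det2_sum_right
    by (intro sum_nonneg) (use assms in \<open>simp add: V_turn_nonneg t_nonneg p_def q_def\<close>)
  ultimately show ?thesis by simp
qed

lemma P_vertex_halfplane: "det2 (V j) (P k - P j) \<ge> 0"
proof -
  define k' where "k' = j + (k - j) mod (2 * int n)"
  have "k' = k + (- ((k - j) div (2 * int n))) * (2 * int n)"
    using minus_div_mult_eq_mod[of "k - j" "2 * int n"] by (simp add: k'_def)
  then have Pk: "P k' = P k" by (simp only: periodic_int_add_mult[where f = P, OF P_per])
  have k': "j \<le> k'" "k' < j + 2 * int n" using n2 by (auto simp: k'_def)
  show ?thesis
  proof (cases "k' \<le> j + int n")
    case True
    define q where "q = nat (k' - j)"
    have "P k' - P j = (\<Sum>m<q. t (j + int m) *\<^sub>R V (j + int m))"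
      using P_diff_sum[of j q] k' by (simp add: q_def)
    moreover have "det2 (V j) (\<Sum>m<q. t (j + int m) *\<^sub>R V (j + int m)) \<ge> 0"
      unfolding det2_sum_right using True
      by (intro sum_nonneg) (simp add: V_turn_nonneg t_nonneg q_def)
    ultimately show ?thesis using Pk by simp
  next
    case False
    define q where "q = nat (j + 2 * int n - k')"
    have "P (j + 2 * int n) - P k' = (\<Sum>m<q. t (k' + int m) *\<^sub>R V (k' + int m))"
      using P_diff_sum[of k' q] k' by (simp add: q_def)
    then have "P k' - P j = - (\<Sum>m<q. t (k' + int m) *\<^sub>R V (k' + int m))"
      using P_per[of j] by (simp add: algebra_simps)
    moreover have "det2 (V j) (- (\<Sum>m<q. t (k' + int m) *\<^sub>R V (k' + int m)))
        = (\<Sum>m<q. t (k' + int m) * det2 (V (k' + int m)) (V (j + 2 * int n)))"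
      unfolding det2_uminus_right det2_sum_right V_per
      by (simp add: sum_negf[symmetric] det2_swap[of "V j"])
    moreover have "\<dots> \<ge> 0" using False
      by (intro sum_nonneg) (simp add: V_turn_nonneg t_nonneg q_def)
    ultimately show ?thesis using Pk by simp
  qed
qed

lemma compact_K: "compact K"
  by (simp add: finite_imp_compact_convex_hull)

lemma P_in_K: "P k \<in> K"
proof -
  have "P ((k - 1) mod (2 * int n) + 1) \<in> K"
    using mod_period_range by (intro hull_inc imageI)
  then show ?thesis using periodic_int_mod[where f = P and l = 0, OF P_per] by simp
qed

lemma K_halfplane: "x \<in> K \<Longrightarrow> det2 (V j) (x - P j) \<ge> 0"
  using hull_minimal[of "P ` {1..2 * int n}" "{x. 0 \<le> det2 (V j) (x - P j)}" convex]
    P_vertex_halfplane convex_det2_ge by blast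

lemma P_shift_n: "P (j + int n) = M j - c *\<^sub>R U j"
  and P_eq_M: "P j = M j + c *\<^sub>R U j"
  using P_diag[of j] by (simp_all add: Mid_def vec_eq_iff algebra_simps)

lemma M_shift_n: "M (j + int n) = M j"
  using P_per[of j] by (simp add: Mid_def ac_simps)

lemma M_in_K: "M j \<in> K"
proof -
  have "M j = (1/2) *\<^sub>R P j + (1/2) *\<^sub>R P (j + int n)"
    by (simp add: Mid_def scaleR_right_distrib)
  then show ?thesis by (simp add: convexD[OF convex_convex_hull P_in_K P_in_K])
qed

lemma edge_nonzero: "edge j \<noteq> 0"
  using d_pos[of j] det2_U_edge[of j] by auto

lemma M_step: "M (j+1) - M j = (t j / d j - c) *\<^sub>R edge j"
proof -
  have "M (j+1) - M j = (P (j+1) - P j) - c *\<^sub>R edge j"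
    using P_eq_M[of j] P_eq_M[of "j+1"] by (simp add: edge_def algebra_simps)
  then show ?thesis using P_step[of j] by (simp add: V_eq algebra_simps)
qed

lemma alpha_eq: "alpha U P n j = t j / d j - c"
  unfolding alpha_def
proof (rule the_equality)
  fix a assume "M (j+1) - M j = a *\<^sub>R (U (j+1) - U j)"
  then show "a = t j / d j - c"
    using M_step[of j] edge_nonzero[of j] by (simp add: edge_def)
qed (use M_step in \<open>simp add: edge_def\<close>)

lemma M_step_alpha: "M (j+1) - M j = alpha U P n j *\<^sub>R edge j"
  by (simp add: alpha_eq M_step)

lemma alpha_shift_n: "alpha U P n (j + int n) = - alpha U P n j"
proof -
  have "M (j + int n + 1) - M (j + int n) = M (j+1) - M j"
    using M_shift_n[of j] M_shift_n[of "j+1"] by (simp add: ac_simps)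
  then have "alpha U P n (j + int n) *\<^sub>R edge (j + int n) = alpha U P n j *\<^sub>R edge j"
    by (simp only: M_step_alpha)
  then show ?thesis
    using edge_nonzero[of j] by (simp add: edge_shift_n flip: scaleR_minus_left)
qed

lemma beta_eq_sum: "beta U P n j = 1/2 * (\<Sum>k<n. alpha U P n (j + int k) * d (j + int k))"
  unfolding beta_def d_def[symmetric] by (simp add: sum_int_interval_nat)

lemma beta_prev: "beta U P n (i - 1) = beta U P n i + alpha U P n (i - 1) * d (i - 1)"
proof -
  define f where "f j = alpha U P n j * d j" for j
  obtain m where m: "n = Suc m" using n2 by (cases n) auto
  have "(\<Sum>k<n. f (i - 1 + int k)) = f (i - 1) + (\<Sum>k<m. f (i + int k))"
    unfolding m sum.lessThan_Suc_shift by (simp add: algebra_simps)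
  moreover have "(\<Sum>k<n. f (i + int k)) = (\<Sum>k<m. f (i + int k)) + f (i + int m)"
    unfolding m by simp
  moreover have "f (i + int m) = - f (i - 1)"
    using alpha_shift_n[of "i - 1"] d_shift_n[of "i - 1"] m by (simp add: f_def)
  ultimately show ?thesis unfolding beta_eq_sum f_def by (simp add: algebra_simps)
qed

lemma det2_U_N_prev: "det2 (U i) (Nh U P n (i - 1) - M i) = beta U P n i"
proof -
  have "Nh U P n (i - 1) - M i
      = beta U P n (i - 1) *\<^sub>R V (i - 1) - alpha U P n (i - 1) *\<^sub>R edge (i - 1)"
    using M_step_alpha[of "i - 1"] by (simp add: Nh_def algebra_simps)
  moreover have "det2 (U i) (edge (i - 1)) = d (i - 1)"
    by (simp add: edge_def d_def det2_def algebra_simps)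
  ultimately show ?thesis by (simp add: det2_U_V_prev beta_prev)
qed

lemma lside_eq: "lside U P n i x = - (2 * c) * (det2 (U i) (x - M i) - beta U P n i)"
proof -
  have "P (i + int n) - P i = - ((2 * c) *\<^sub>R U i)"
    using P_diag[of i] by (metis minus_diff_eq)
  then have "lside U P n i x = - (2 * c) * det2 (U i) (x - Nh U P n (i - 1))"
    by (simp add: lside_def del: det2_diff_right)
  then show ?thesis using det2_U_N_prev[of i] by (simp add: algebra_simps)
qed

subsection \<open>Fans from the midpoint M b\<close>

definition fan_triangle :: "int \<Rightarrow> int \<Rightarrow> (real^2) set" where
  "fan_triangle b j = convex hull {M b, P j, P (j+1)}"

definition fan_area :: "int \<Rightarrow> int \<Rightarrow> real" where
  "fan_area b j = det2 (P j - M b) (P (j+1) - M b) / 2"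

definition half :: "int \<Rightarrow> (real^2) set" where
  "half b = {x \<in> K. 0 \<le> det2 (U b) (x - M b)}"

lemma fan_turn_nonneg:
  assumes "b \<le> a" "a \<le> a'" "a' \<le> b + int n"
  shows "det2 (P a - M b) (P a' - M b) \<ge> 0"
proof -
  have "det2 (P a - M b) (P a' - M b)
      = det2 (P a - P b) (P a' - P a) / 2 + det2 (P a' - P a) (P (b + int n) - P a') / 2"
    unfolding Mid_def det2_def by (simp add: field_simps)
  moreover have "det2 (P a - P b) (P a' - P a) \<ge> 0" "det2 (P a' - P a) (P (b + int n) - P a') \<ge> 0"
    using assms by (auto intro!: P_turn_nonneg simp del: det2_diff_left det2_diff_right)
  ultimately show ?thesis by simp
qed

lemma fan_area_nonneg: "b \<le> j \<Longrightarrow> j < b + int n \<Longrightarrow> fan_area b j \<ge> 0"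
  unfolding fan_area_def by (simp add: fan_turn_nonneg del: det2_diff_left det2_diff_right)

lemma measure_fan_triangle: "measure lebesgue (fan_triangle b j) = \<bar>fan_area b j\<bar>"
  unfolding fan_triangle_def fan_area_def measure_triangle_det2 by simp

lemma lmeasurable_fan_triangle: "fan_triangle b j \<in> lmeasurable"
  unfolding fan_triangle_def by (intro lmeasurable_compact finite_imp_compact_convex_hull) simp

lemma fan_triangle_subset_half:
  assumes "b \<le> j" "j < b + int n"
  shows "fan_triangle b j \<subseteq> half b"
proof -
  have "det2 (U b) (P a - M b) \<ge> 0" if "b \<le> a" "a \<le> b + int n" for a
    using fan_turn_nonneg[of b b a] that c_pos P_eq_M[of b]
    by (simp add: zero_le_mult_iff del: det2_diff_left det2_diff_right)
  then have "fan_triangle b j \<subseteq> {x. 0 \<le> det2 (U b) (x - M b)}"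
    unfolding fan_triangle_def using assms
    by (intro hull_minimal convex_det2_ge) (auto simp del: det2_diff_left det2_diff_right)
  moreover have "fan_triangle b j \<subseteq> K"
    unfolding fan_triangle_def by (rule hull_minimal) (auto simp: M_in_K P_in_K)
  ultimately show ?thesis by (auto simp: half_def)
qed

text \<open>The line through M b and P (j+1) separates the two triangles.\<close>
lemma negligible_fan_triangle_Int:
  assumes "b \<le> j" "j < k" "k < b + int n"
  shows "negligible (fan_triangle b j \<inter> fan_triangle b k)"
proof (cases "P (j+1) - M b = 0")
  case True
  then have "measure lebesgue (fan_triangle b j) = 0"
    by (simp add: measure_fan_triangle fan_area_def)
  then have "negligible (fan_triangle b j)"
    using lmeasurable_fan_triangle negligible_iff_measure0 by blast
  then show ?thesis by (rule negligible_subset) auto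
next
  case False
  have "fan_triangle b j \<subseteq> {z. det2 (P (j+1) - M b) (z - M b) \<le> 0}"
    unfolding fan_triangle_def using fan_turn_nonneg[of b j "j+1"] assms
    by (intro hull_minimal convex_det2_le)
       (auto simp: det2_swap[of "P j - M b"] simp del: det2_diff_left det2_diff_right)
  moreover have "fan_triangle b k \<subseteq> {z. 0 \<le> det2 (P (j+1) - M b) (z - M b)}"
    unfolding fan_triangle_def
    using fan_turn_nonneg[of b "j+1" k] fan_turn_nonneg[of b "j+1" "k+1"] assms
    by (intro hull_minimal convex_det2_ge) (auto simp del: det2_diff_left det2_diff_right)
  ultimately have "fan_triangle b j \<inter> fan_triangle b k \<subseteq> {z. det2 (P (j+1) - M b) (z - M b) = 0}"
    by fastforce
  then show ?thesis using negligible_det2_line[OF False] negligible_subset by blast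
qed

lemma half_subset_fan:
  assumes x: "x \<in> K" and pos: "det2 (U b) (x - M b) > 0"
  shows "\<exists>k<n. x \<in> fan_triangle b (b + int k)"
proof -
  define g where "g a = det2 (P a - M b) (x - M b)" for a
  have "g b > 0" using pos c_pos P_eq_M[of b] by (simp add: g_def del: det2_diff_left)
  moreover have "g (b + int n) = - g b"
    using P_shift_n[of b] P_eq_M[of b] by (simp add: g_def del: det2_diff_left)
  ultimately obtain k where k: "k < n" "0 < g (b + int k)" "g (b + int k + 1) \<le> 0"
    using int_sign_change[of g b n] by auto
  define j where "j = b + int k"
  have h1: "0 \<le> det2 (P j - M b) (x - M b)" using k by (simp add: g_def j_def)
  have h2: "0 \<le> det2 (P (j+1) - P j) (x - P j)"
    using K_halfplane[OF x, of j] t_nonneg[of j]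
    by (simp add: P_step del: det2_diff_left det2_diff_right)
  have "det2 (M b - P (j+1)) (x - P (j+1)) = - g (j+1)"
    by (simp add: g_def det2_def algebra_simps)
  then have h3: "0 \<le> det2 (M b - P (j+1)) (x - P (j+1))" using k by (simp add: j_def)
  have "det2 (P j - M b) (P (j+1) - M b) \<noteq> 0"
    using det2_triangle_sum[of "P j" "M b" x "P (j+1)"] h2 h3 k
    by (simp add: g_def j_def del: det2_diff_left det2_diff_right)
  then have "x \<in> fan_triangle b j"
    unfolding fan_triangle_def using h1 h2 h3 by (intro in_triangle_det2)
  then show ?thesis using k(1) j_def by blast
qed

lemma measure_half: "measure lebesgue (half b) = (\<Sum>k<n. fan_area b (b + int k))"
proof -
  have "negligible (fan_triangle b (b + int k) \<inter> fan_triangle b (b + int l))" if "k < l" "l < n" for k l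
    using that by (intro negligible_fan_triangle_Int) auto
  then have "pairwise (\<lambda>k l. negligible (fan_triangle b (b + int k) \<inter> fan_triangle b (b + int l)))
                {..<n}"
    unfolding pairwise_def by (metis Int_commute linorder_neqE_nat lessThan_iff)
  moreover have "(\<Union>k\<in>{..<n}. fan_triangle b (b + int k)) \<subseteq> half b"
    by (intro UN_least fan_triangle_subset_half) auto
  moreover have "half b \<subseteq> (\<Union>k\<in>{..<n}. fan_triangle b (b + int k)) \<union> {x. det2 (U b) (x - M b) = 0}"
    using half_subset_fan by (force simp: half_def)
  moreover have "negligible {x. det2 (U b) (x - M b) = 0}"
    using U_nonzero by (rule negligible_det2_line)
  ultimately have "measure lebesgue (half b) = (\<Sum>k<n. measure lebesgue (fan_triangle b (b + int k)))"
    by (intro measure_eq_sum_of_almost_disjoint_cover) (auto simp: lmeasurable_fan_triangle)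
  then show ?thesis by (simp add: measure_fan_triangle fan_area_nonneg)
qed

lemma half_shift_n: "half (b + int n) = {x \<in> K. det2 (U b) (x - M b) \<le> 0}"
  by (auto simp: half_def M_shift_n U_sym simp del: det2_diff_right)

lemma fan_area_antipodal_diff:
  "fan_area i j - fan_area i (j + int n)
   = c * (det2 (M (j+1) - M i) (U (j+1)) - det2 (M j - M i) (U j))
     + 2 * c * (alpha U P n j * d j)"
proof -
  have P_eqs: "P j = M j + c *\<^sub>R U j" "P (j+1) = M (j+1) + c *\<^sub>R U (j+1)"
    "P (j + int n) = M j - c *\<^sub>R U j" "P (j + int n + 1) = M (j+1) - c *\<^sub>R U (j+1)"
    using P_eq_M P_shift_n[of j] P_shift_n[of "j+1"] by (simp_all add: ac_simps)
  have M_next: "M (j+1) = M j + alpha U P n j *\<^sub>R edge j"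
    using M_step_alpha[of j] by (simp add: algebra_simps)
  show ?thesis
    unfolding fan_area_def P_eqs M_next by (simp add: d_def edge_def det2_def field_simps)
qed

lemma measure_halves_diff:
  "measure lebesgue {x \<in> K. 0 \<le> det2 (U i) (x - M i)}
   - measure lebesgue {x \<in> K. det2 (U i) (x - M i) \<le> 0} = 4 * c * beta U P n i"
proof -
  define F where "F j = det2 (M j - M i) (U j)" for j
  define A where "A k = alpha U P n (i + int k) * d (i + int k)" for k
  have "measure lebesgue (half i) - measure lebesgue (half (i + int n))
      = (\<Sum>k<n. fan_area i (i + int k) - fan_area i (i + int k + int n))"
    by (simp add: measure_half M_shift_n fan_area_def sum_subtractf ac_simps)
  also have "\<dots> = (\<Sum>k<n. c * (F (i + int (Suc k)) - F (i + int k)) + 2 * c * A k)"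
  proof (rule sum.cong[OF refl])
    fix k
    show "fan_area i (i + int k) - fan_area i (i + int k + int n)
        = c * (F (i + int (Suc k)) - F (i + int k)) + 2 * c * A k"
      using fan_area_antipodal_diff[of i "i + int k"]
      by (simp add: F_def A_def ac_simps del: det2_diff_left)
  qed
  also have "\<dots> = c * (F (i + int n) - F i) + 2 * c * (\<Sum>k<n. A k)"
    using sum_lessThan_telescope[of "\<lambda>k. F (i + int k)" n]
    by (simp add: sum.distrib sum_distrib_left[symmetric])
  also have "F (i + int n) = F i"
    by (simp add: F_def M_shift_n U_sym)
  finally show ?thesis
    unfolding half_shift_n by (simp add: beta_eq_sum A_def half_def)
qed

lemma K_strip: "x \<in> K \<Longrightarrow> 0 \<le> det2 (V i) (x - P i) \<and> det2 (V i) (x - P i) \<le> 2 * c"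
  using K_halfplane[of x i] K_halfplane[of x "i + int n"] det2_U_V[of i]
  by (simp add: V_shift_n P_shift_n P_eq_M[of i] det2_swap[of "U i"])

lemma measure_slab_le:
  assumes "0 \<le> b" "\<bar>s\<bar> = 1"
  shows "measure lebesgue {x \<in> K. 0 \<le> s * det2 (U i) (x - M i) \<and> s * det2 (U i) (x - M i) \<le> b}
         \<le> 2 * c * b"
proof -
  let ?S = "{x \<in> K. 0 \<le> s * det2 (U i) (x - M i) \<and> s * det2 (U i) (x - M i) \<le> b}"
  have "?S = K \<inter> {x. 0 \<le> s * det2 (U i) (x - M i) \<and> s * det2 (U i) (x - M i) \<le> b}" by blast
  moreover have "closed {x. 0 \<le> s * det2 (U i) (x - M i) \<and> s * det2 (U i) (x - M i) \<le> b}"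
    by (intro closed_Collect_conj closed_Collect_le continuous_on_mult_left continuous_on_det2
        continuous_on_const)
  ultimately have lmeas: "?S \<in> lmeasurable"
    by (simp only: lmeasurable_compact compact_Int_closed compact_K)
  have eq: "det2 (s *\<^sub>R U i) (x - P i) = s * det2 (U i) (x - M i)" for x
    by (simp add: P_eq_M[of i] algebra_simps)
  have "measure lebesgue ?S \<le> (b - 0) * (2 * c - 0) / \<bar>det2 (s *\<^sub>R U i) (V i)\<bar>"
  proof (rule measure_le_det2_parallelogram[OF lmeas])
    fix x assume "x \<in> ?S"
    then show "0 \<le> det2 (s *\<^sub>R U i) (x - P i) \<and> det2 (s *\<^sub>R U i) (x - P i) \<le> b \<and>
               0 \<le> det2 (V i) (x - P i) \<and> det2 (V i) (x - P i) \<le> 2 * c"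
      using K_strip[of x i] unfolding eq by blast
  qed (use assms c_pos in \<open>simp_all add: det2_U_V\<close>)
  then show ?thesis using assms by (simp add: det2_U_V mult.commute)
qed

end

theorem lemma4p4:
  fixes n :: nat and U P :: "int \<Rightarrow> real^2" and c :: real and i :: int and s :: real
  assumes n2: "n \<ge> 2"
    and U_per: "\<forall>k. U (k + 2 * int n) = U k"
    and U_dist: "inj_on U {1..2 * int n}"
    and U_convex_ccw: "\<forall>j\<in>{1..2 * int n}. \<forall>k\<in>{1..2 * int n}.
             k \<noteq> j \<and> U k \<noteq> U (j+1) \<longrightarrow> det2 (U (j+1) - U j) (U k - U j) > 0"
    and U_sym: "\<forall>k. U (k + int n) = - U k"
    and c_pos: "c > 0"
    and P_per: "\<forall>k. P (k + 2 * int n) = P k"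
    and P_edges: "\<forall>k. \<exists>t\<ge>0. P (k+1) - P k = t *\<^sub>R Vh U k"
    and P_diag: "\<forall>k. P k - P (k + int n) = (2 * c) *\<^sub>R U k"
    and P_int: "interior (convex hull (P ` {1..2 * int n})) \<noteq> {}"
    and i_range: "1 \<le> i" "i \<le> int n"
    and s_sign: "s = 1 \<or> s = -1"
    and side_Pi: "s * lside U P n i (P i) \<ge> 0"
    and side_Pin: "s * lside U P n i (P (i + int n)) \<ge> 0"
  shows "measure lebesgue {x \<in> convex hull (P ` {1..2 * int n}). s * lside U P n i x \<le> 0}
       \<ge> measure lebesgue {x \<in> convex hull (P ` {1..2 * int n}). s * lside U P n i x \<ge> 0}"
proof -
  interpret paired_polygons n U P c
    using n2 U_per U_dist U_convex_ccw U_sym c_pos P_per P_edges P_diag by unfold_locales blast+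
  define g where "g x = s * det2 (U i) (x - M i)" for x
  define b where "b = s * beta U P n i"
  have side: "s * lside U P n i x = - (2 * c) * (g x - b)" for x
    by (simp add: lside_eq g_def b_def algebra_simps)
  have "0 \<le> b"
    using side_Pi c_pos by (simp add: side g_def P_eq_M[of i] zero_le_mult_iff)
  have "\<bar>s\<bar> = 1" using s_sign by auto
  have slab: "measure lebesgue {x \<in> K. 0 \<le> g x \<and> g x \<le> b} \<le> 2 * c * b"
    unfolding g_def using measure_slab_le[OF \<open>0 \<le> b\<close> \<open>\<bar>s\<bar> = 1\<close>] .
  have halves:
    "measure lebesgue {x \<in> K. g x \<le> 0} + 2 * (2 * c * b) \<le> measure lebesgue {x \<in> K. 0 \<le> g x}"
    using measure_halves_diff[of i] s_sign by (auto simp: g_def b_def simp del: det2_diff_right)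
  have "continuous_on UNIV g"
    unfolding g_def by (intro continuous_on_mult_left continuous_on_det2)
  then have "measure lebesgue {x \<in> K. g x \<le> b} \<le> measure lebesgue {x \<in> K. b \<le> g x}"
    by (rule measure_sublevel_le_superlevel[OF compact_K _ slab halves])
  moreover have "{x \<in> K. s * lside U P n i x \<le> 0} = {x \<in> K. b \<le> g x}"
    "{x \<in> K. 0 \<le> s * lside U P n i x} = {x \<in> K. g x \<le> b}"
    using c_pos by (auto simp: side mult_le_0_iff zero_le_mult_iff)
  ultimately show ?thesis by simp
qed

end
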